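(* Let $\mathbb{T}$ be a finite time scale and $a\in\mathbb{T}$ such that exactly $m$ elements of $\mathbb{T}$ are larger than $a$ and exactly $r$ elements are smaller than $a$, where $m\geq1$, $r\geq0$ and $r+m\geq2$; thus $\mathbb{T}$ has $n=m+r+1$ elements. Let $\alpha=\min\mathbb{T}$, $\beta=\rho(\max\mathbb{T})$ (the second largest element of $\mathbb{T}$), let $q$ be real-valued, and consider the boundary value problem $$-y^{\Delta\Delta}(t)+q(t)\,y(a)=\lambda\, y^{\sigma}(t),\quad t\in\mathbb{T}^{\kappa^{2}},\qquad U(y)=0,\quad V(y)=0,$$ where $U(y)=a_{11}y(\alpha)+a_{12}y^{\Delta}(\alpha)+a_{21}y(\beta)+a_{22}y^{\Delta}(\beta)$ and $V(y)=b_{11}y(\alpha)+b_{12}y^{\Delta}(\alpha)+b_{21}y(\beta)+b_{22}y^{\Delta}(\beta)$ with real coefficients $a_{ij},b_{ij}$. Let $$A=\begin{pmatrix}a_{11}\mu(\alpha)-a_{12} & b_{11}\mu(\alpha)-b_{12}\\ a_{22} & b_{22}\end{pmatrix}.$$ If $\det A\neq0$, the problem has exactly $n-2$ eigenvalues counted with multiplicities; otherwise the number of eigenvalues counted with multiplicities is less than $n-2$.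
   Context: For a time scale $\mathbb{T}$, $\sigma$, $\rho$ are the forward and backward jump operators, $\mu(t)=\sigma(t)-t$, $y^{\sigma}=y\circ\sigma$, $y^{\Delta}$, $y^{\Delta\Delta}$ are the delta derivatives (on a finite time scale $y^{\Delta}(t)=(y(\sigma(t))-y(t))/\mu(t)$), $\mathbb{T}^{\kappa}$ is $\mathbb{T}$ with its largest element removed and $\mathbb{T}^{\kappa^2}=(\mathbb{T}^{\kappa})^{\kappa}$. An eigenvalue is a $\lambda\in\mathbb{C}$ for which the problem has a nontrivial solution. Let $S(t,\lambda)$, $C(t,\lambda)$ be the solutions of the equation with $S(a,\lambda)=0$, $S^{\Delta}(a,\lambda)=1$, $C(a,\lambda)=1$, $C^{\Delta}(a,\lambda)=0$ and $\Delta(\lambda)=U(C)V(S)-V(C)U(S)$; on a finite time scale $\Delta(\lambda)$ is a polynomial in $\lambda$ whose zeros are exactly the eigenvalues, and the multiplicity of an eigenvalue is its multiplicity as a zero of $\Delta$. *)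

theory Defs
  imports "HOL-Computational_Algebra.Polynomial"
begin

text \<open>A finite time scale is modelled as a finite nonempty set T of reals.
  Functions on T are total functions real => complex whose values off T are irrelevant.\<close>

definition ts_sigma :: "real set \<Rightarrow> real \<Rightarrow> real" where
  "ts_sigma T t = (if \<exists>s\<in>T. s > t then Min {s\<in>T. s > t} else t)"

definition ts_rho :: "real set \<Rightarrow> real \<Rightarrow> real" where
  "ts_rho T t = (if \<exists>s\<in>T. s < t then Max {s\<in>T. s < t} else t)"

definition ts_mu :: "real set \<Rightarrow> real \<Rightarrow> real" where
  "ts_mu T t = ts_sigma T t - t"

definition ts_delta :: "real set \<Rightarrow> (real \<Rightarrow> complex) \<Rightarrow> real \<Rightarrow> complex" where
  "ts_delta T y t = (y (ts_sigma T t) - y t) / complex_of_real (ts_mu T t)"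

definition ts_kappa :: "real set \<Rightarrow> real set" where
  "ts_kappa T = T - {Max T}"

definition is_sol :: "real set \<Rightarrow> real \<Rightarrow> (real \<Rightarrow> real) \<Rightarrow> complex \<Rightarrow> (real \<Rightarrow> complex) \<Rightarrow> bool" where
  "is_sol T a q lam y \<longleftrightarrow>
     (\<forall>t\<in>ts_kappa (ts_kappa T).
        - ts_delta T (ts_delta T y) t + complex_of_real (q t) * y a = lam * y (ts_sigma T t))"

definition bform :: "real set \<Rightarrow> real \<Rightarrow> real \<Rightarrow> real \<Rightarrow> real \<Rightarrow> (real \<Rightarrow> complex) \<Rightarrow> complex" where
  "bform T c11 c12 c21 c22 y =
     (let al = Min T; be = ts_rho T (Max T) in
      complex_of_real c11 * y al + complex_of_real c12 * ts_delta T y al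
      + complex_of_real c21 * y be + complex_of_real c22 * ts_delta T y be)"

definition solS :: "real set \<Rightarrow> real \<Rightarrow> (real \<Rightarrow> real) \<Rightarrow> complex \<Rightarrow> real \<Rightarrow> complex" where
  "solS T a q lam = (THE y. is_sol T a q lam y \<and> y a = 0 \<and> ts_delta T y a = 1
                          \<and> (\<forall>t. t \<notin> T \<longrightarrow> y t = 0))"

definition solC :: "real set \<Rightarrow> real \<Rightarrow> (real \<Rightarrow> real) \<Rightarrow> complex \<Rightarrow> real \<Rightarrow> complex" where
  "solC T a q lam = (THE y. is_sol T a q lam y \<and> y a = 1 \<and> ts_delta T y a = 0
                          \<and> (\<forall>t. t \<notin> T \<longrightarrow> y t = 0))"

definition char_fun ::
  "real set \<Rightarrow> real \<Rightarrow> (real \<Rightarrow> real) \<Rightarrow> real \<Rightarrow> real \<Rightarrow> real \<Rightarrow> real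
   \<Rightarrow> real \<Rightarrow> real \<Rightarrow> real \<Rightarrow> real \<Rightarrow> complex \<Rightarrow> complex" where
  "char_fun T a q a11 a12 a21 a22 b11 b12 b21 b22 lam =
     bform T a11 a12 a21 a22 (solC T a q lam) * bform T b11 b12 b21 b22 (solS T a q lam)
   - bform T b11 b12 b21 b22 (solC T a q lam) * bform T a11 a12 a21 a22 (solS T a q lam)"

definition char_poly ::
  "real set \<Rightarrow> real \<Rightarrow> (real \<Rightarrow> real) \<Rightarrow> real \<Rightarrow> real \<Rightarrow> real \<Rightarrow> real
   \<Rightarrow> real \<Rightarrow> real \<Rightarrow> real \<Rightarrow> real \<Rightarrow> complex poly" where
  "char_poly T a q a11 a12 a21 a22 b11 b12 b21 b22 =
     (THE p. \<forall>lam. poly p lam = char_fun T a q a11 a12 a21 a22 b11 b12 b21 b22 lam)"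

definition is_eigenvalue ::
  "real set \<Rightarrow> real \<Rightarrow> (real \<Rightarrow> real) \<Rightarrow> real \<Rightarrow> real \<Rightarrow> real \<Rightarrow> real
   \<Rightarrow> real \<Rightarrow> real \<Rightarrow> real \<Rightarrow> real \<Rightarrow> complex \<Rightarrow> bool" where
  "is_eigenvalue T a q a11 a12 a21 a22 b11 b12 b21 b22 lam \<longleftrightarrow>
     (\<exists>y. (\<exists>t\<in>T. y t \<noteq> 0) \<and> is_sol T a q lam y
          \<and> bform T a11 a12 a21 a22 y = 0 \<and> bform T b11 b12 b21 b22 y = 0)"

definition eig_mult ::
  "real set \<Rightarrow> real \<Rightarrow> (real \<Rightarrow> real) \<Rightarrow> real \<Rightarrow> real \<Rightarrow> real \<Rightarrow> real
   \<Rightarrow> real \<Rightarrow> real \<Rightarrow> real \<Rightarrow> real \<Rightarrow> complex \<Rightarrow> nat" where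
  "eig_mult T a q a11 a12 a21 a22 b11 b12 b21 b22 lam =
     order lam (char_poly T a q a11 a12 a21 a22 b11 b12 b21 b22)"

end

(*
  Enumerate T as t_0 < ... < t_(n-1), so that a = t_r.  At t_j the equation links y(t_j),
  y(t_(j+1)), y(t_(j+2)) and y(a); it can be solved for y(t_(j+2)) when j >= r and for y(t_j)
  when j < r, and lambda enters the coefficient of y(t_(j+1)) linearly with nonzero slope.
  Hence C(t_i, lambda) and S(t_i, lambda) are polynomials in lambda whose degrees grow by one
  per step away from a, every solution is a combination of C and S, and the eigenvalues are the
  roots of Delta.

  By the Binet-Cauchy formula, Delta is a combination of the Casoratians
  C(t_i) S(t_j) - C(t_j) S(t_i) over the boundary indices i, j in {0, 1, n-2, n-1}.  The
  Casoratians obey the same three-term recurrences, which bounds the degree of all of them by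
  n-3 except the one for (0, n-1): that one has degree n-2 and a nonzero leading coefficient.
  Its coefficient in Delta is det A / (mu(alpha) mu(beta)), so Delta has degree n-2 exactly
  when det A is nonzero and smaller degree otherwise, while the multiplicities of the roots of
  a nonzero polynomial add up to its degree.
*)

theory Submission
  imports Defs "HOL-Computational_Algebra.Fundamental_Theorem_Algebra"
begin

section \<open>Finite time scales\<close>

definition ts_nth :: "real set \<Rightarrow> nat \<Rightarrow> real" where
  "ts_nth T k = sorted_list_of_set T ! k"

context
  fixes T :: "real set"
  assumes fin: "finite T"
begin

lemma ts_nth_less_iff:
  assumes "i < card T" "j < card T"
  shows "ts_nth T i < ts_nth T j \<longleftrightarrow> i < j"
proof -
  have "ts_nth T i < ts_nth T j" if "i < j" "j < card T" for i j
    using sorted_wrt_nth_less[OF strict_sorted_list_of_set[of T]] that fin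
    by (simp add: ts_nth_def)
  then show ?thesis
    using assms by (metis less_asym' linorder_neqE_nat)
qed

lemma ts_nth_le_iff:
  assumes "i < card T" "j < card T"
  shows "ts_nth T i \<le> ts_nth T j \<longleftrightarrow> i \<le> j"
  using ts_nth_less_iff[OF assms(2,1)] by linarith

lemma ts_nth_eq_iff:
  assumes "i < card T" "j < card T"
  shows "ts_nth T i = ts_nth T j \<longleftrightarrow> i = j"
  using ts_nth_less_iff[OF assms] ts_nth_less_iff[OF assms(2,1)] by auto

lemma ts_nth_in: "k < card T \<Longrightarrow> ts_nth T k \<in> T"
  using fin by (metis length_sorted_list_of_set nth_mem set_sorted_list_of_set ts_nth_def)

lemma ts_nth_cases:
  assumes "s \<in> T"
  obtains k where "k < card T" "s = ts_nth T k"
  using assms fin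
  by (metis in_set_conv_nth length_sorted_list_of_set set_sorted_list_of_set ts_nth_def)

lemma image_ts_nth: "ts_nth T ` {..<card T} = T"
proof
  show "T \<subseteq> ts_nth T ` {..<card T}"
    by (auto elim!: ts_nth_cases)
qed (auto intro: ts_nth_in)

lemma ts_nth_below:
  assumes "k < card T"
  shows "{s\<in>T. s < ts_nth T k} = ts_nth T ` {..<k}"
  using assms ts_nth_in ts_nth_less_iff by (auto elim!: ts_nth_cases)

lemma ts_nth_above:
  assumes "k < card T"
  shows "{s\<in>T. s > ts_nth T k} = ts_nth T ` {k<..<card T}"
  using assms ts_nth_in ts_nth_less_iff by (auto elim!: ts_nth_cases)

lemma card_below_ts_nth:
  assumes "k < card T"
  shows "card {s\<in>T. s < ts_nth T k} = k"
proof -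
  have "inj_on (ts_nth T) {..<k}"
    using assms ts_nth_eq_iff by (intro inj_onI) auto
  then show ?thesis
    using assms by (simp add: ts_nth_below card_image)
qed

lemma Max_image_ts_nth:
  assumes "k < card T"
  shows "Max (ts_nth T ` {..<Suc k}) = ts_nth T k"
  using assms ts_nth_le_iff by (intro Max_eqI) auto

lemma ts_sigma_nth:
  assumes "Suc k < card T"
  shows "ts_sigma T (ts_nth T k) = ts_nth T (Suc k)"
proof -
  have "ts_nth T (Suc k) \<in> T" "ts_nth T k < ts_nth T (Suc k)"
    using assms ts_nth_in ts_nth_less_iff by auto
  then have "\<exists>s\<in>T. s > ts_nth T k"
    by blast
  moreover have "Min (ts_nth T ` {k<..<card T}) = ts_nth T (Suc k)"
  proof (rule Min_eqI)
    show "ts_nth T (Suc k) \<le> s" if "s \<in> ts_nth T ` {k<..<card T}" for s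
      using that assms by (auto simp: ts_nth_le_iff)
    show "ts_nth T (Suc k) \<in> ts_nth T ` {k<..<card T}"
      using assms by simp
  qed simp
  ultimately show ?thesis
    using ts_nth_above[OF Suc_lessD[OF assms]] by (simp add: ts_sigma_def)
qed

lemma ts_mu_nth:
  "Suc k < card T \<Longrightarrow> ts_mu T (ts_nth T k) = ts_nth T (Suc k) - ts_nth T k"
  by (simp add: ts_mu_def ts_sigma_nth)

lemma ts_rho_nth:
  assumes "Suc k < card T"
  shows "ts_rho T (ts_nth T (Suc k)) = ts_nth T k"
proof -
  have "ts_nth T k \<in> T" "ts_nth T k < ts_nth T (Suc k)"
    using assms ts_nth_in ts_nth_less_iff by auto
  then have "\<exists>s\<in>T. s < ts_nth T (Suc k)"
    by blast
  then show ?thesis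
    unfolding ts_rho_def ts_nth_below[OF assms] Max_image_ts_nth[OF Suc_lessD[OF assms]]
    by (simp only: if_True)
qed

lemma Min_eq_ts_nth:
  assumes "T \<noteq> {}"
  shows "Min T = ts_nth T 0"
proof (rule Min_eqI)
  have "0 < card T"
    using assms fin by (simp add: card_gt_0_iff)
  then show "ts_nth T 0 \<in> T"
    by (rule ts_nth_in)
  show "ts_nth T 0 \<le> s" if "s \<in> T" for s
    using that \<open>0 < card T\<close> ts_nth_le_iff by (auto elim: ts_nth_cases)
qed (use fin in simp)

lemma Max_eq_ts_nth: "card T = Suc k \<Longrightarrow> Max T = ts_nth T k"
  using Max_image_ts_nth[of k] image_ts_nth by simp

lemma ts_kappa_prefix:
  assumes "k < card T"
  shows "ts_kappa (ts_nth T ` {..<Suc k}) = ts_nth T ` {..<k}"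
  using assms ts_nth_eq_iff Max_image_ts_nth[OF assms]
  by (auto simp: ts_kappa_def lessThan_Suc)

lemma ts_kappa_kappa:
  assumes "card T = Suc (Suc k)"
  shows "ts_kappa (ts_kappa T) = ts_nth T ` {..<k}"
  using ts_kappa_prefix[of "Suc k"] ts_kappa_prefix[of k] image_ts_nth assms by simp

end

lemma card_split:
  fixes T :: "'a::linorder set"
  assumes "finite T" "a \<in> T"
  shows "card T = card {t\<in>T. t < a} + card {t\<in>T. t > a} + 1"
proof -
  let ?L = "{t\<in>T. t < a}" and ?G = "{t\<in>T. t > a}"
  have "T = ?L \<union> insert a ?G"
    using assms(2) by (auto simp: neq_iff)
  moreover have "card (?L \<union> insert a ?G) = card ?L + card (insert a ?G)"
    using assms(1) by (intro card_Un_disjoint) auto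
  moreover have "card (insert a ?G) = card ?G + 1"
    using assms(1) by simp
  ultimately show ?thesis
    by simp
qed

lemma ts_sigma_in: "finite T \<Longrightarrow> t \<in> T \<Longrightarrow> ts_sigma T t \<in> T"
  unfolding ts_sigma_def by (auto intro: Min_in[THEN CollectD, THEN conjunct1])

lemma ts_rho_in: "finite T \<Longrightarrow> t \<in> T \<Longrightarrow> ts_rho T t \<in> T"
  unfolding ts_rho_def by (auto intro: Max_in[THEN CollectD, THEN conjunct1])

lemma ts_delta_lincomb:
  "ts_delta T (\<lambda>s. c0 * y s + c1 * z s) t = c0 * ts_delta T y t + c1 * ts_delta T z t"
  by (simp add: ts_delta_def algebra_simps add_divide_distrib diff_divide_distrib)

lemma is_sol_lincomb:
  assumes "is_sol T a q lam y" "is_sol T a q lam z"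
  shows "is_sol T a q lam (\<lambda>s. c0 * y s + c1 * z s)"
proof -
  have lin: "ts_delta T (\<lambda>s. c0 * f s + c1 * g s) = (\<lambda>t. c0 * ts_delta T f t + c1 * ts_delta T g t)"
    for f g
    by (rule ext) (rule ts_delta_lincomb)
  have "ts_delta T (ts_delta T (\<lambda>s. c0 * y s + c1 * z s))
      = (\<lambda>t. c0 * ts_delta T (ts_delta T y) t + c1 * ts_delta T (ts_delta T z) t)"
    unfolding lin ..
  then show ?thesis
    using assms unfolding is_sol_def by (simp add: algebra_simps)
qed

lemma bform_lincomb:
  "bform T c11 c12 c21 c22 (\<lambda>s. c0 * y s + c1 * z s)
     = c0 * bform T c11 c12 c21 c22 y + c1 * bform T c11 c12 c21 c22 z"
  by (simp add: bform_def Let_def ts_delta_lincomb algebra_simps)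

lemma bform_cong:
  assumes "finite T" "T \<noteq> {}" "\<And>s. s \<in> T \<Longrightarrow> y s = z s"
  shows "bform T c11 c12 c21 c22 y = bform T c11 c12 c21 c22 z"
proof -
  have "Min T \<in> T" "ts_rho T (Max T) \<in> T"
    using assms by (simp_all add: ts_rho_in)
  then show ?thesis
    using assms by (simp add: bform_def Let_def ts_delta_def ts_sigma_in)
qed

lemma degree_linear_mult_le:
  "degree ([:a, b:] * p) \<le> degree p + 1"
proof -
  have "degree [:a, b:] \<le> 1"
    by simp
  then show ?thesis
    using degree_mult_le[of "[:a, b:]" p] by linarith
qed

lemma degree_three_term_recurrence:
  fixes w g :: "nat \<Rightarrow> 'a::comm_ring_1 poly"
  assumes rec: "\<And>k. k < K \<Longrightarrow> w (k+2) = [:\<alpha> k, \<beta> k:] * w (k+1) - smult (\<gamma> k) (w k) + g k"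
    and w0: "degree (w 0) \<le> d" and w1: "degree (w 1) \<le> d"
    and g: "\<And>k. k < K \<Longrightarrow> degree (g k) \<le> d + k"
    and "k \<le> K"
  shows "degree (w (k+1)) \<le> d + k \<and> coeff (w (k+1)) (d+k) = coeff (w 1) d * (\<Prod>i<k. \<beta> i)"
proof -
  have "degree (w k) \<le> d + k \<and> degree (w (k+1)) \<le> d + k \<and>
        coeff (w (k+1)) (d+k) = coeff (w 1) d * (\<Prod>i<k. \<beta> i)"
    using \<open>k \<le> K\<close>
  proof (induction k)
    case 0
    then show ?case using w0 w1 by simp
  next
    case (Suc k)
    then have IH: "degree (w k) \<le> d + k" "degree (w (k+1)) \<le> d + k"
        "coeff (w (k+1)) (d+k) = coeff (w 1) d * (\<Prod>i<k. \<beta> i)" and "k < K"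
      by auto
    have step: "w (Suc k + 1) = [:\<alpha> k, \<beta> k:] * w (k+1) - smult (\<gamma> k) (w k) + g k"
      using rec[OF \<open>k < K\<close>] by simp
    have "degree ([:\<alpha> k, \<beta> k:] * w (k+1)) \<le> d + Suc k"
      using degree_linear_mult_le[of "\<alpha> k" "\<beta> k" "w (k+1)"] IH(2) by linarith
    moreover have "degree (smult (\<gamma> k) (w k)) \<le> d + Suc k"
      using degree_smult_le[of "\<gamma> k" "w k"] IH(1) by linarith
    moreover have "degree (g k) \<le> d + Suc k"
      using g[OF \<open>k < K\<close>] by linarith
    ultimately have "degree (w (Suc k + 1)) \<le> d + Suc k"
      unfolding step by (intro degree_add_le degree_diff_le)
    moreover have "coeff (w (Suc k + 1)) (d + Suc k) = \<beta> k * coeff (w (k+1)) (d+k)"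
    proof -
      have "coeff (w (k+1)) (Suc (d+k)) = 0" "coeff (w k) (Suc (d+k)) = 0"
        "coeff (g k) (Suc (d+k)) = 0"
        using IH(1,2) g[OF \<open>k < K\<close>] by (auto intro: coeff_eq_0)
      then show ?thesis
        unfolding step by (simp add: mult_pCons_left)
    qed
    ultimately show ?case
      using IH by (simp add: mult_ac)
  qed
  then show ?thesis by blast
qed

lemma coeff_mult_degree_le_sum:
  fixes p q :: "'a::comm_semiring_0 poly"
  assumes "degree p \<le> a" "degree q \<le> b"
  shows "coeff (p * q) (a + b) = coeff p a * coeff q b"
proof (cases "degree p = a \<and> degree q = b")
  case True
  then show ?thesis using coeff_mult_degree_sum[of p q] by simp
next
  case False
  then have "degree p < a \<or> degree q < b"
    using assms by auto
  then have "coeff p a = 0 \<or> coeff q b = 0" and "degree (p * q) < a + b"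
    using degree_mult_le[of p q] assms by (auto intro: coeff_eq_0)
  then show ?thesis by (auto intro: coeff_eq_0)
qed

lemma sum_order_roots_eq_degree:
  fixes p :: "complex poly"
  assumes "p \<noteq> 0"
  shows "(\<Sum>x | poly p x = 0. order x p) = degree p"
proof -
  have "degree p = size (proots p)"
    by (simp add: size_proots_complex)
  also have "\<dots> = sum (count (proots p)) (set_mset (proots p))"
    by (rule size_multiset_overloaded_eq)
  finally show ?thesis
    using assms by simp
qed

lemma sum_order_roots_degree_bound:
  fixes p :: "complex poly"
  assumes "degree p \<le> d"
  shows "coeff p d \<noteq> 0 \<Longrightarrow> finite {x. poly p x = 0} \<and> (\<Sum>x | poly p x = 0. order x p) = d"
    and "coeff p d = 0 \<Longrightarrow> finite {x. poly p x = 0} \<Longrightarrow> (\<Sum>x | poly p x = 0. order x p) < d"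
proof -
  assume "coeff p d \<noteq> 0"
  then have "p \<noteq> 0" and "degree p = d"
    using assms le_degree by (auto intro: antisym)
  then show "finite {x. poly p x = 0} \<and> (\<Sum>x | poly p x = 0. order x p) = d"
    using poly_roots_finite sum_order_roots_eq_degree by auto
next
  assume "coeff p d = 0" and fin: "finite {x. poly p x = 0}"
  have "p \<noteq> 0"
    using fin infinite_UNIV_char_0 by auto
  moreover have "degree p \<noteq> d"
    using \<open>coeff p d = 0\<close> \<open>p \<noteq> 0\<close> by auto
  ultimately show "(\<Sum>x | poly p x = 0. order x p) < d"
    using assms sum_order_roots_eq_degree by simp
qed

lemma binet_cauchy_4:
  fixes A1 A2 A3 A4 B1 B2 B3 B4 x0 x1 x2 x3 s0 s1 s2 s3 :: "'a::comm_ring"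
  shows "(A1*x0 + A2*x1 + A3*x2 + A4*x3) * (B1*s0 + B2*s1 + B3*s2 + B4*s3)
       - (B1*x0 + B2*x1 + B3*x2 + B4*x3) * (A1*s0 + A2*s1 + A3*s2 + A4*s3)
    = (A1*B2 - A2*B1)*(x0*s1 - x1*s0) + (A1*B3 - A3*B1)*(x0*s2 - x2*s0)
    + (A1*B4 - A4*B1)*(x0*s3 - x3*s0) + (A2*B3 - A3*B2)*(x1*s2 - x2*s1)
    + (A2*B4 - A4*B2)*(x1*s3 - x3*s1) + (A3*B4 - A4*B3)*(x2*s3 - x3*s2)"
  by (simp add: algebra_simps)

lemma det2_eq_0_iff_nontrivial_kernel:
  fixes u1 u2 v1 v2 :: "'a::field"
  shows "u1*v2 - v1*u2 = 0 \<longleftrightarrow>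
    (\<exists>c0 c1. (c0 \<noteq> 0 \<or> c1 \<noteq> 0) \<and> c0*u1 + c1*u2 = 0 \<and> c0*v1 + c1*v2 = 0)"
proof
  assume det: "u1*v2 - v1*u2 = 0"
  show "\<exists>c0 c1. (c0 \<noteq> 0 \<or> c1 \<noteq> 0) \<and> c0*u1 + c1*u2 = 0 \<and> c0*v1 + c1*v2 = 0"
  proof (cases "u1 = 0 \<and> u2 = 0")
    case True
    show ?thesis
    proof (cases "v1 = 0 \<and> v2 = 0")
      case True
      then show ?thesis
        using \<open>u1 = 0 \<and> u2 = 0\<close> by (intro exI[of _ 1] exI[of _ 0]) simp
    next
      case False
      then show ?thesis
        using \<open>u1 = 0 \<and> u2 = 0\<close> by (intro exI[of _ v2] exI[of _ "- v1"]) (auto simp: algebra_simps)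
    qed
  next
    case False
    then show ?thesis
      using det by (intro exI[of _ u2] exI[of _ "- u1"]) (auto simp: algebra_simps)
  qed
next
  assume "\<exists>c0 c1. (c0 \<noteq> 0 \<or> c1 \<noteq> 0) \<and> c0*u1 + c1*u2 = 0 \<and> c0*v1 + c1*v2 = 0"
  then obtain c0 c1 where nz: "c0 \<noteq> 0 \<or> c1 \<noteq> 0"
    and u: "c0*u1 + c1*u2 = 0" and v: "c0*v1 + c1*v2 = 0"
    by blast
  have "c0 * (u1*v2 - v1*u2) = (c0*u1 + c1*u2)*v2 - (c0*v1 + c1*v2)*u2"
    and "c1 * (u1*v2 - v1*u2) = (c0*v1 + c1*v2)*u1 - (c0*u1 + c1*u2)*v1"
    by (simp_all add: algebra_simps)
  then show "u1*v2 - v1*u2 = 0"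
    using nz u v by auto
qed

section \<open>Degrees in a two-sided three-term recurrence\<close>

lemma casorati_identity_fwd:
  fixes L C G x x0 x1 xi s s0 s1 si :: "'a::comm_ring"
  assumes "x = L*x1 - C*x0 + G" "s = L*s1 - C*s0"
  shows "xi*s - x*si = L*(xi*s1 - x1*si) - C*(xi*s0 - x0*si) - G*si"
  unfolding assms by (simp add: algebra_simps)

lemma casorati_identity_bwd:
  fixes L C G x x1 x2 xk s s1 s2 sk :: "'a::comm_ring"
  assumes "x = L*x1 - C*x2 + G" "s = L*s1 - C*s2"
  shows "x*sk - xk*s = L*(x1*sk - xk*s1) - C*(x2*sk - xk*s2) + G*sk"
  unfolding assms by (simp add: algebra_simps)

lemma smult_as_const_mult: "smult c p = [:c:] * p"
  by simp

locale two_sided_recurrence =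
  fixes X S :: "nat \<Rightarrow> 'a::comm_ring_1 poly" and r n :: nat
    and \<alpha> \<beta> \<gamma> \<eta> \<alpha>' \<beta>' \<gamma>' \<eta>' :: "nat \<Rightarrow> 'a" and s :: 'a
  assumes X_fwd: "\<And>j. r \<le> j \<Longrightarrow> j+2 < n \<Longrightarrow>
      X (j+2) = [:\<alpha> j, \<beta> j:] * X (j+1) - smult (\<gamma> j) (X j) + smult (\<eta> j) (X r)"
    and S_fwd: "\<And>j. r \<le> j \<Longrightarrow> j+2 < n \<Longrightarrow>
      S (j+2) = [:\<alpha> j, \<beta> j:] * S (j+1) - smult (\<gamma> j) (S j) + smult (\<eta> j) (S r)"
    and X_bwd: "\<And>j. j < r \<Longrightarrow>
      X j = [:\<alpha>' j, \<beta>' j:] * X (j+1) - smult (\<gamma>' j) (X (j+2)) + smult (\<eta>' j) (X r)"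
    and S_bwd: "\<And>j. j < r \<Longrightarrow>
      S j = [:\<alpha>' j, \<beta>' j:] * S (j+1) - smult (\<gamma>' j) (S (j+2)) + smult (\<eta>' j) (S r)"
    and X_r: "X r = 1" and X_Suc_r: "X (Suc r) = 1"
    and S_r: "S r = 0" and S_Suc_r: "S (Suc r) = [:s:]"
    and Suc_r_less: "Suc r < n"
begin

lemma degree_X_right:
  assumes "r < i" "i < n"
  shows "degree (X i) \<le> i - r - 1"
proof -
  have "degree ((\<lambda>k. X (r+k)) (i - r - 1 + 1)) \<le> 0 + (i - r - 1)"
  proof (rule degree_three_term_recurrence[where K = "n - r - 2", THEN conjunct1])
    show "X (r + (k+2)) = [:\<alpha> (r+k), \<beta> (r+k):] * X (r + (k+1)) - smult (\<gamma> (r+k)) (X (r+k))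
        + smult (\<eta> (r+k)) 1" if "k < n - r - 2" for k
      using X_fwd[of "r+k"] that X_r by (simp add: add.assoc)
  qed (use assms X_r X_Suc_r in auto)
  then show ?thesis
    using assms by simp
qed

lemma degree_S_right:
  assumes "r < i" "i < n"
  shows "degree (S i) \<le> i - r - 1"
    and "coeff (S i) (i - r - 1) = s * (\<Prod>k < i - r - 1. \<beta> (r+k))"
proof -
  have "degree ((\<lambda>k. S (r+k)) (i - r - 1 + 1)) \<le> 0 + (i - r - 1) \<and>
    coeff ((\<lambda>k. S (r+k)) (i - r - 1 + 1)) (0 + (i - r - 1))
      = coeff ((\<lambda>k. S (r+k)) 1) 0 * (\<Prod>k < i - r - 1. \<beta> (r+k))"
  proof (rule degree_three_term_recurrence[where K = "n - r - 2"])
    show "S (r + (k+2)) = [:\<alpha> (r+k), \<beta> (r+k):] * S (r + (k+1)) - smult (\<gamma> (r+k)) (S (r+k)) + 0"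
      if "k < n - r - 2" for k
      using S_fwd[of "r+k"] that S_r by (simp add: add.assoc)
  qed (use assms S_r S_Suc_r in auto)
  then show "degree (S i) \<le> i - r - 1" "coeff (S i) (i - r - 1) = s * (\<Prod>k < i - r - 1. \<beta> (r+k))"
    using assms S_Suc_r by simp_all
qed

lemma degree_X_left:
  assumes "i \<le> r"
  shows "degree (X i) \<le> r - i"
    and "coeff (X i) (r - i) = (\<Prod>k < r - i. \<beta>' (r - 1 - k))"
proof -
  have "degree ((\<lambda>k. X (r + 1 - k)) (r - i + 1)) \<le> 0 + (r - i) \<and>
    coeff ((\<lambda>k. X (r + 1 - k)) (r - i + 1)) (0 + (r - i))
      = coeff ((\<lambda>k. X (r + 1 - k)) 1) 0 * (\<Prod>k < r - i. \<beta>' (r - 1 - k))"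
  proof (rule degree_three_term_recurrence[where K = r])
    fix k assume "k < r"
    then have "r - 1 - k + 1 = r + 1 - (k+1)" "r - 1 - k + 2 = r + 1 - k"
      "r + 1 - (k+2) = r - 1 - k"
      by auto
    then show "X (r + 1 - (k+2)) = [:\<alpha>' (r - 1 - k), \<beta>' (r - 1 - k):] * X (r + 1 - (k+1))
        - smult (\<gamma>' (r - 1 - k)) (X (r + 1 - k)) + smult (\<eta>' (r - 1 - k)) 1"
      using X_bwd[of "r - 1 - k"] \<open>k < r\<close> X_r by simp
  qed (use assms X_r X_Suc_r in auto)
  then show "degree (X i) \<le> r - i" "coeff (X i) (r - i) = (\<Prod>k < r - i. \<beta>' (r - 1 - k))"
    using assms X_r by simp_all
qed

lemma degree_S_left:
  assumes "i \<le> r"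
  shows "degree (S i) \<le> r - i - 1"
proof (cases "i = r")
  case False
  have "degree (S (r - 1)) \<le> 0"
    using S_bwd[of "r - 1"] assms False S_r S_Suc_r by simp
  moreover have "degree ((\<lambda>k. S (r - k)) (r - i - 1 + 1)) \<le> 0 + (r - i - 1)"
  proof (rule degree_three_term_recurrence[where K = "r - 1", THEN conjunct1])
    fix k assume "k < r - 1"
    then have "r - 2 - k + 1 = r - (k+1)" "r - 2 - k + 2 = r - k" "r - (k+2) = r - 2 - k"
      by auto
    then show "S (r - (k+2)) = [:\<alpha>' (r - 2 - k), \<beta>' (r - 2 - k):] * S (r - (k+1))
        - smult (\<gamma>' (r - 2 - k)) (S (r - k)) + 0"
      using S_bwd[of "r - 2 - k"] \<open>k < r - 1\<close> S_r by simp
  qed (use assms False S_r calculation in auto)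
  ultimately show ?thesis
    using assms False by simp
qed (simp add: S_r)

definition casorati :: "nat \<Rightarrow> nat \<Rightarrow> 'a poly" where
  "casorati i j = X i * S j - X j * S i"

lemma casorati_self [simp]: "casorati i i = 0"
  by (simp add: casorati_def)

lemma casorati_swap: "casorati j i = - casorati i j"
  by (simp add: casorati_def)

lemma casorati_expansion:
  "(smult A1 (X i) + smult A2 (X j) + smult A3 (X k) + smult A4 (X l))
     * (smult B1 (S i) + smult B2 (S j) + smult B3 (S k) + smult B4 (S l))
   - (smult B1 (X i) + smult B2 (X j) + smult B3 (X k) + smult B4 (X l))
     * (smult A1 (S i) + smult A2 (S j) + smult A3 (S k) + smult A4 (S l))
   = smult (A1*B2 - A2*B1) (casorati i j) + smult (A1*B3 - A3*B1) (casorati i k)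
   + smult (A1*B4 - A4*B1) (casorati i l) + smult (A2*B3 - A3*B2) (casorati j k)
   + smult (A2*B4 - A4*B2) (casorati j l) + smult (A3*B4 - A4*B3) (casorati k l)"
  unfolding smult_as_const_mult binet_cauchy_4 casorati_def by (simp add: mult.commute)

lemma casorati_fwd:
  assumes "r \<le> j" "j+2 < n"
  shows "casorati i (j+2)
    = [:\<alpha> j, \<beta> j:] * casorati i (j+1) - smult (\<gamma> j) (casorati i j) - smult (\<eta> j) (S i)"
proof -
  have "X (j+2) = [:\<alpha> j, \<beta> j:] * X (j+1) - [:\<gamma> j:] * X j + [:\<eta> j:]"
    and "S (j+2) = [:\<alpha> j, \<beta> j:] * S (j+1) - [:\<gamma> j:] * S j"
    using X_fwd[OF assms] S_fwd[OF assms] by (simp_all add: X_r S_r)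
  from casorati_identity_fwd[OF this, of "X i" "S i"] show ?thesis
    by (simp only: casorati_def smult_as_const_mult)
qed

lemma casorati_bwd:
  assumes "j < r"
  shows "casorati j k
    = [:\<alpha>' j, \<beta>' j:] * casorati (j+1) k - smult (\<gamma>' j) (casorati (j+2) k) + smult (\<eta>' j) (S k)"
proof -
  have "X j = [:\<alpha>' j, \<beta>' j:] * X (j+1) - [:\<gamma>' j:] * X (j+2) + [:\<eta>' j:]"
    and "S j = [:\<alpha>' j, \<beta>' j:] * S (j+1) - [:\<gamma>' j:] * S (j+2)"
    using X_bwd[OF assms] S_bwd[OF assms] by (simp_all add: X_r S_r)
  from casorati_identity_bwd[OF this, of "S k" "X k"] show ?thesis
    by (simp only: casorati_def smult_as_const_mult)
qed

lemma degree_casorati_Suc_right: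
  assumes "r \<le> i" "Suc i < n"
  shows "degree (casorati i (Suc i)) \<le> i - r - 1"
  using assms
proof (induction i rule: nat_induct_at_least)
  case base
  then show ?case
    by (simp add: casorati_def X_r S_r S_Suc_r)
next
  case (Suc i)
  have "casorati (Suc i) (Suc (Suc i)) = smult (\<gamma> i) (casorati i (Suc i)) - smult (\<eta> i) (S (Suc i))"
    using casorati_fwd[of i "Suc i"] Suc by (simp add: casorati_swap[of "Suc i" i])
  moreover have "degree (S (Suc i)) \<le> i - r"
    using degree_S_right[of "Suc i"] Suc by simp
  ultimately show ?case
    using Suc by (auto intro!: degree_diff_le order.trans[OF degree_smult_le])
qed

lemma degree_casorati_right:
  assumes "r < i" "i \<le> j" "j < n"
  shows "degree (casorati i j) \<le> j - r - 2"
  using assms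
proof (induction j rule: less_induct)
  case (less j)
  consider "j = i" | "j = Suc i" | "Suc (Suc i) \<le> j"
    using \<open>i \<le> j\<close> by linarith
  then show ?case
  proof cases
    case 1
    then show ?thesis by simp
  next
    case 2
    then show ?thesis
      using degree_casorati_Suc_right[of i] less.prems by simp
  next
    case 3
    define j' where "j' = j - 2"
    have j: "j = j' + 2" "r \<le> j'" "i \<le> j'"
      using 3 less.prems unfolding j'_def by auto
    have "degree (casorati i (j' + 1)) \<le> j' - r - 1"
      using less.IH[of "j' + 1"] less.prems j by simp
    then have "degree ([:\<alpha> j', \<beta> j':] * casorati i (j' + 1)) \<le> j - r - 2"
      using degree_linear_mult_le[of "\<alpha> j'" "\<beta> j'" "casorati i (j' + 1)"] less.prems j by linarith
    moreover have "degree (casorati i j') \<le> j - r - 2"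
      using less.IH[of j'] less.prems j by fastforce
    moreover have "degree (S i) \<le> j - r - 2"
      using degree_S_right(1)[of i] less.prems j by fastforce
    ultimately show ?thesis
      unfolding j(1) casorati_fwd[OF j(2) less.prems(3)[unfolded j(1)]]
      by (intro degree_diff_le order.trans[OF degree_smult_le]) (use j in auto)
  qed
qed

lemma degree_casorati_Suc_left:
  assumes "i \<le> r"
  shows "degree (casorati i (Suc i)) \<le> r - i - 1"
  using assms
proof (induction i rule: inc_induct)
  case base
  then show ?case
    by (simp add: casorati_def X_r S_r S_Suc_r)
next
  case (step i)
  have "casorati i (Suc i)
      = smult (\<gamma>' i) (casorati (Suc i) (Suc (Suc i))) + smult (\<eta>' i) (S (Suc i))"
    using casorati_bwd[of i "Suc i"] step by (simp add: casorati_swap[of "Suc (Suc i)"])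
  moreover have "degree (S (Suc i)) \<le> r - i - 1"
    using degree_S_left[of "Suc i"] step by simp
  ultimately show ?case
    using step by (auto intro!: degree_add_le order.trans[OF degree_smult_le])
qed

lemma degree_casorati_left:
  assumes "i \<le> j" "j \<le> r"
  shows "degree (casorati i j) \<le> r - i - 1"
  using assms
proof (induction "j - i" arbitrary: i rule: less_induct)
  case less
  consider "j = i" | "j = Suc i" | "Suc (Suc i) \<le> j"
    using \<open>i \<le> j\<close> by linarith
  then show ?case
  proof cases
    case 1
    then show ?thesis by simp
  next
    case 2
    then show ?thesis
      using degree_casorati_Suc_left[of i] less.prems by simp
  next
    case 3
    have "degree (casorati (Suc i) j) \<le> r - i - 2"
      using less.hyps[of "Suc i"] less.prems 3 by simp
    then have "degree ([:\<alpha>' i, \<beta>' i:] * casorati (Suc i) j) \<le> r - i - 1"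
      using degree_linear_mult_le[of "\<alpha>' i" "\<beta>' i" "casorati (Suc i) j"] less.prems 3 by linarith
    moreover have "degree (casorati (Suc (Suc i)) j) \<le> r - i - 1"
      using less.hyps[of "Suc (Suc i)"] less.prems 3 by fastforce
    moreover have "degree (S j) \<le> r - i - 1"
      using degree_S_left[of j] less.prems by simp
    ultimately show ?thesis
      using casorati_bwd[of i j] less.prems 3
      by (auto intro!: degree_add_le degree_diff_le order.trans[OF degree_smult_le])
  qed
qed

lemma degree_casorati_across:
  assumes "i \<le> r" "r < j" "j < n"
  shows "degree (casorati i j) \<le> j - i - 1"
    and "coeff (casorati i j) (j - i - 1) = coeff (X i) (r - i) * coeff (S j) (j - r - 1)"
proof -
  have "r - i + (j - r - 1) = j - i - 1"
    using assms by simp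
  moreover have "degree (X i) \<le> r - i" "degree (S j) \<le> j - r - 1"
    using degree_X_left[of i] degree_S_right[of j] assms by simp_all
  ultimately have XiSj: "degree (X i * S j) \<le> j - i - 1"
    "coeff (X i * S j) (j - i - 1) = coeff (X i) (r - i) * coeff (S j) (j - r - 1)"
    using degree_mult_le[of "X i" "S j"]
      coeff_mult_degree_le_sum[of "X i" "r - i" "S j" "j - r - 1"]
    by simp_all
  have "degree (X j * S i) < j - i - 1 \<or> X j * S i = 0"
  proof (cases "i = r")
    case False
    have "degree (X j) \<le> j - r - 1" "degree (S i) \<le> r - i - 1"
      using degree_X_right[of j] degree_S_left[of i] assms by simp_all
    then show ?thesis
      using degree_mult_le[of "X j" "S i"] assms False by auto
  qed (simp add: S_r)
  then have XjSi: "degree (X j * S i) \<le> j - i - 1" "coeff (X j * S i) (j - i - 1) = 0"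
    by (auto intro: coeff_eq_0)
  show "degree (casorati i j) \<le> j - i - 1"
    unfolding casorati_def using XiSj XjSi by (intro degree_diff_le)
  show "coeff (casorati i j) (j - i - 1) = coeff (X i) (r - i) * coeff (S j) (j - r - 1)"
    unfolding casorati_def coeff_diff XiSj XjSi by simp
qed

lemma degree_casorati_le:
  assumes "i \<le> j" "j < n" "(i, j) \<noteq> (0, n - 1)"
  shows "degree (casorati i j) \<le> n - 3"
proof -
  consider "j \<le> r" | "r < i" | "i \<le> r" "r < j"
    by linarith
  then show ?thesis
  proof cases
    case 1
    then show ?thesis
      using degree_casorati_left[of i j] assms Suc_r_less by linarith
  next
    case 2
    then show ?thesis
      using degree_casorati_right[of i j] assms by linarith
  next
    case 3
    then show ?thesis
      using degree_casorati_across(1)[of i j] assms by auto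
  qed
qed

lemma casorati_first_last:
  "degree (casorati 0 (n - 1)) \<le> n - 2"
  "coeff (casorati 0 (n - 1)) (n - 2)
     = (\<Prod>k<r. \<beta>' (r - 1 - k)) * s * (\<Prod>k < n - r - 2. \<beta> (r+k))"
  using degree_casorati_across[of 0 "n - 1"] degree_X_left(2)[of 0] degree_S_right(2)[of "n - 1"]
    Suc_r_less
  by (simp_all add: diff_diff_add numeral_2_eq_2 mult.assoc)

end

section \<open>The equation as a recurrence in the point index\<close>

text \<open>The equation at the \<open>j\<close>-th point of \<open>T\<close> in terms of \<open>Y k = y (t k)\<close>, the gaps
  \<open>mu k = t (k + 1) - t k\<close> and \<open>Q k = q (t k)\<close>, where \<open>a = t r\<close>.\<close>

definition sl_eqn ::
  "(nat \<Rightarrow> real) \<Rightarrow> (nat \<Rightarrow> real) \<Rightarrow> nat \<Rightarrow> complex \<Rightarrow> (nat \<Rightarrow> complex) \<Rightarrow> nat \<Rightarrow> bool" where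
  "sl_eqn mu Q r lam Y j \<longleftrightarrow>
     - (((Y (Suc (Suc j)) - Y (Suc j)) / of_real (mu (Suc j)) - (Y (Suc j) - Y j) / of_real (mu j))
         / of_real (mu j)) + of_real (Q j) * Y r = lam * Y (Suc j)"

definition fwd_const :: "(nat \<Rightarrow> real) \<Rightarrow> nat \<Rightarrow> complex" where
  "fwd_const mu j = 1 + of_real (mu (Suc j) / mu j)"
definition fwd_lam :: "(nat \<Rightarrow> real) \<Rightarrow> nat \<Rightarrow> complex" where
  "fwd_lam mu j = - of_real (mu j * mu (Suc j))"
definition fwd_prev :: "(nat \<Rightarrow> real) \<Rightarrow> nat \<Rightarrow> complex" where
  "fwd_prev mu j = of_real (mu (Suc j) / mu j)"
definition fwd_nonlocal :: "(nat \<Rightarrow> real) \<Rightarrow> (nat \<Rightarrow> real) \<Rightarrow> nat \<Rightarrow> complex" where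
  "fwd_nonlocal mu Q j = of_real (mu j * mu (Suc j) * Q j)"

definition bwd_const :: "(nat \<Rightarrow> real) \<Rightarrow> nat \<Rightarrow> complex" where
  "bwd_const mu j = 1 + of_real (mu j / mu (Suc j))"
definition bwd_lam :: "(nat \<Rightarrow> real) \<Rightarrow> nat \<Rightarrow> complex" where
  "bwd_lam mu j = - of_real (mu j ^ 2)"
definition bwd_next :: "(nat \<Rightarrow> real) \<Rightarrow> nat \<Rightarrow> complex" where
  "bwd_next mu j = of_real (mu j / mu (Suc j))"
definition bwd_nonlocal :: "(nat \<Rightarrow> real) \<Rightarrow> (nat \<Rightarrow> real) \<Rightarrow> nat \<Rightarrow> complex" where
  "bwd_nonlocal mu Q j = of_real (mu j ^ 2 * Q j)"

lemma second_difference_eq_solve_next: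
  fixes m m' q lam y0 y1 y2 yr :: complex
  assumes "m \<noteq> 0" "m' \<noteq> 0"
  shows "- (((y2 - y1) / m' - (y1 - y0) / m) / m) + q * yr = lam * y1 \<longleftrightarrow>
     y2 = (1 + m' / m + lam * (- (m * m'))) * y1 - (m' / m) * y0 + (m * m' * q) * yr"
proof -
  have "(m * m') * (- (((y2 - y1) / m' - (y1 - y0) / m) / m) + q * yr - lam * y1)
      = - (y2 - ((1 + m' / m + lam * (- (m * m'))) * y1 - (m' / m) * y0 + (m * m' * q) * yr))"
    using assms by (simp add: field_simps)
  then show ?thesis
    using assms by (metis eq_iff_diff_eq_0 minus_diff_eq mult_eq_0_iff neg_0_equal_iff_equal)
qed

lemma second_difference_eq_solve_prev:
  fixes m m' q lam y0 y1 y2 yr :: complex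
  assumes "m \<noteq> 0" "m' \<noteq> 0"
  shows "- (((y2 - y1) / m' - (y1 - y0) / m) / m) + q * yr = lam * y1 \<longleftrightarrow>
     y0 = (1 + m / m' + lam * (- (m^2))) * y1 - (m / m') * y2 + (m^2 * q) * yr"
proof -
  have "m^2 * (- (((y2 - y1) / m' - (y1 - y0) / m) / m) + q * yr - lam * y1)
      = ((1 + m / m' + lam * (- (m^2))) * y1 - (m / m') * y2 + (m^2 * q) * yr) - y0"
    using assms by (simp add: field_simps power2_eq_square)
  then show ?thesis
    using assms by (metis eq_iff_diff_eq_0 mult_eq_0_iff power_not_zero)
qed

lemma sl_eqn_fwd_iff:
  assumes "mu j \<noteq> 0" "mu (Suc j) \<noteq> 0"
  shows "sl_eqn mu Q r lam Y j \<longleftrightarrow> Y (Suc (Suc j))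
    = (fwd_const mu j + lam * fwd_lam mu j) * Y (Suc j) - fwd_prev mu j * Y j
      + fwd_nonlocal mu Q j * Y r"
  using second_difference_eq_solve_next[of "of_real (mu j)" "of_real (mu (Suc j))"] assms
  unfolding sl_eqn_def fwd_const_def fwd_lam_def fwd_prev_def fwd_nonlocal_def by simp

lemma sl_eqn_bwd_iff:
  assumes "mu j \<noteq> 0" "mu (Suc j) \<noteq> 0"
  shows "sl_eqn mu Q r lam Y j \<longleftrightarrow> Y j
    = (bwd_const mu j + lam * bwd_lam mu j) * Y (Suc j) - bwd_next mu j * Y (Suc (Suc j))
      + bwd_nonlocal mu Q j * Y r"
  using second_difference_eq_solve_prev[of "of_real (mu j)" "of_real (mu (Suc j))"] assms
  unfolding sl_eqn_def bwd_const_def bwd_lam_def bwd_next_def bwd_nonlocal_def by simp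

lemma sl_eqn_cong:
  assumes "Y j = Y' j" "Y (Suc j) = Y' (Suc j)" "Y (Suc (Suc j)) = Y' (Suc (Suc j))" "Y r = Y' r"
  shows "sl_eqn mu Q r lam Y j = sl_eqn mu Q r lam Y' j"
  using assms by (simp add: sl_eqn_def)

lemma sl_eqn_unique:
  assumes mu: "\<And>j. Suc j < n \<Longrightarrow> mu j \<noteq> 0" and "Suc r < n"
    and Y: "\<And>j. j < n - 2 \<Longrightarrow> sl_eqn mu Q r lam Y j"
    and Y': "\<And>j. j < n - 2 \<Longrightarrow> sl_eqn mu Q r lam Y' j"
    and init: "Y r = Y' r" "Y (Suc r) = Y' (Suc r)"
    and "k < n"
  shows "Y k = Y' k"
proof -
  have right: "Y k = Y' k" if "r \<le> k" "k < n" for k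
    using that
  proof (induction k rule: less_induct)
    case (less k)
    consider "k = r" | "k = Suc r" | j where "k = Suc (Suc j)" "r \<le> j"
      using less.prems by (metis le_SucE le_less Suc_le_D Suc_le_lessD less_Suc_eq_le not_less_eq)
    then show ?case
    proof cases
      case 3
      then have j: "j < n - 2" and nz: "mu j \<noteq> 0" "mu (Suc j) \<noteq> 0"
        using less.prems mu by auto
      show ?thesis
        using Y[OF j] Y'[OF j] less.IH[of j] less.IH[of "Suc j"] less.prems init 3
        unfolding sl_eqn_fwd_iff[OF nz] by simp
    qed (use init in auto)
  qed
  have left: "Y k = Y' k" if "k \<le> Suc r" for k
    using that
  proof (induction "Suc r - k" arbitrary: k rule: less_induct)
    case less
    consider "k = Suc r" | "k = r" | "k < r"
      using less.prems by linarith
    then show ?case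
    proof cases
      case 3
      then have k: "k < n - 2" and nz: "mu k \<noteq> 0" "mu (Suc k) \<noteq> 0"
        using \<open>Suc r < n\<close> mu by auto
      show ?thesis
        using Y[OF k] Y'[OF k] less.hyps[of "Suc k"] less.hyps[of "Suc (Suc k)"] init 3
        unfolding sl_eqn_bwd_iff[OF nz] by simp
    qed (use init in auto)
  qed
  show ?thesis
    using right left \<open>k < n\<close> by (cases "r \<le> k") auto
qed

fun three_term_rec :: "(nat \<Rightarrow> 'a::comm_ring_1) \<Rightarrow> (nat \<Rightarrow> 'a) \<Rightarrow> (nat \<Rightarrow> 'a) \<Rightarrow> (nat \<Rightarrow> 'a)
    \<Rightarrow> 'a poly \<Rightarrow> 'a poly \<Rightarrow> 'a poly \<Rightarrow> nat \<Rightarrow> 'a poly" where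
  "three_term_rec \<alpha> \<beta> \<gamma> \<eta> z w0 w1 0 = w0"
| "three_term_rec \<alpha> \<beta> \<gamma> \<eta> z w0 w1 (Suc 0) = w1"
| "three_term_rec \<alpha> \<beta> \<gamma> \<eta> z w0 w1 (Suc (Suc k)) =
       [:\<alpha> k, \<beta> k:] * three_term_rec \<alpha> \<beta> \<gamma> \<eta> z w0 w1 (Suc k)
     - smult (\<gamma> k) (three_term_rec \<alpha> \<beta> \<gamma> \<eta> z w0 w1 k) + smult (\<eta> k) z"

text \<open>\<open>sol_poly mu Q r y0 y1 i\<close> is the value at the \<open>i\<close>-th point, as a polynomial in \<open>\<lambda>\<close>, of the
  solution taking the values \<open>y0\<close>, \<open>y1\<close> at the points \<open>r\<close>, \<open>r + 1\<close>.\<close>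

abbreviation fwd_rec :: "(nat \<Rightarrow> real) \<Rightarrow> (nat \<Rightarrow> real) \<Rightarrow> nat
    \<Rightarrow> complex poly \<Rightarrow> complex poly \<Rightarrow> complex poly \<Rightarrow> nat \<Rightarrow> complex poly" where
  "fwd_rec mu Q r \<equiv> three_term_rec (\<lambda>k. fwd_const mu (r+k)) (\<lambda>k. fwd_lam mu (r+k))
     (\<lambda>k. fwd_prev mu (r+k)) (\<lambda>k. fwd_nonlocal mu Q (r+k))"

abbreviation bwd_rec :: "(nat \<Rightarrow> real) \<Rightarrow> (nat \<Rightarrow> real) \<Rightarrow> nat
    \<Rightarrow> complex poly \<Rightarrow> complex poly \<Rightarrow> complex poly \<Rightarrow> nat \<Rightarrow> complex poly" where
  "bwd_rec mu Q r \<equiv> three_term_rec (\<lambda>k. bwd_const mu (r-1-k)) (\<lambda>k. bwd_lam mu (r-1-k))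
     (\<lambda>k. bwd_next mu (r-1-k)) (\<lambda>k. bwd_nonlocal mu Q (r-1-k))"

definition sol_poly ::
  "(nat \<Rightarrow> real) \<Rightarrow> (nat \<Rightarrow> real) \<Rightarrow> nat \<Rightarrow> complex poly \<Rightarrow> complex poly \<Rightarrow> nat \<Rightarrow> complex poly" where
  "sol_poly mu Q r y0 y1 i =
     (if r \<le> i then fwd_rec mu Q r y0 y0 y1 (i - r) else bwd_rec mu Q r y0 y1 y0 (r + 1 - i))"

lemma sol_poly_r [simp]: "sol_poly mu Q r y0 y1 r = y0"
  by (simp add: sol_poly_def)

lemma sol_poly_Suc_r [simp]: "sol_poly mu Q r y0 y1 (Suc r) = y1"
  by (simp add: sol_poly_def)

lemma sol_poly_fwd:
  assumes "r \<le> j"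
  shows "sol_poly mu Q r y0 y1 (j+2)
    = [:fwd_const mu j, fwd_lam mu j:] * sol_poly mu Q r y0 y1 (j+1)
      - smult (fwd_prev mu j) (sol_poly mu Q r y0 y1 j)
      + smult (fwd_nonlocal mu Q j) (sol_poly mu Q r y0 y1 r)"
proof -
  have "j + 2 - r = Suc (Suc (j - r))" "j + 1 - r = Suc (j - r)" "r + (j - r) = j"
    using assms by auto
  then show ?thesis
    using assms by (simp add: sol_poly_def)
qed

lemma sol_poly_left:
  assumes "i \<le> Suc r"
  shows "sol_poly mu Q r y0 y1 i = bwd_rec mu Q r y0 y1 y0 (Suc r - i)"
  using assms by (cases "i < r") (auto simp: sol_poly_def le_Suc_eq)

lemma sol_poly_bwd:
  assumes "j < r"
  shows "sol_poly mu Q r y0 y1 j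
    = [:bwd_const mu j, bwd_lam mu j:] * sol_poly mu Q r y0 y1 (j+1)
      - smult (bwd_next mu j) (sol_poly mu Q r y0 y1 (j+2))
      + smult (bwd_nonlocal mu Q j) (sol_poly mu Q r y0 y1 r)"
proof -
  have "Suc r - j = Suc (Suc (r - 1 - j))" "Suc r - (j + 1) = Suc (r - 1 - j)"
    "Suc r - (j + 2) = r - 1 - j" "r - 1 - (r - 1 - j) = j"
    using assms by auto
  then show ?thesis
    using assms by (simp add: sol_poly_left)
qed

lemma sol_poly_sl_eqn:
  assumes "mu j \<noteq> 0" "mu (Suc j) \<noteq> 0"
  shows "sl_eqn mu Q r lam (\<lambda>i. poly (sol_poly mu Q r y0 y1 i) lam) j"
proof (cases "r \<le> j")
  case True
  show ?thesis
    unfolding sl_eqn_fwd_iff[OF assms]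
    using arg_cong[OF sol_poly_fwd[OF True, of mu Q y0 y1], of "\<lambda>p. poly p lam"]
    by (simp add: algebra_simps)
next
  case False
  show ?thesis
    unfolding sl_eqn_bwd_iff[OF assms]
    using arg_cong[OF sol_poly_bwd[of j r mu Q y0 y1], of "\<lambda>p. poly p lam"] False
    by (simp add: algebra_simps)
qed

section \<open>Eigenvalues as roots of the characteristic polynomial\<close>

locale finite_bvp =
  fixes T :: "real set" and a :: real and q :: "real \<Rightarrow> real" and r :: nat
  assumes finite_T: "finite T" and a_in_T: "a \<in> T" and card_below_a: "card {t\<in>T. t < a} = r"
    and Suc_r_less: "Suc r < card T" and card_ge_3: "3 \<le> card T"
begin

abbreviation n :: nat where "n \<equiv> card T"
abbreviation t :: "nat \<Rightarrow> real" where "t \<equiv> ts_nth T"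

definition mu :: "nat \<Rightarrow> real" where "mu k = t (Suc k) - t k"
definition Q :: "nat \<Rightarrow> real" where "Q k = q (t k)"

lemma mu_nonzero: "Suc k < n \<Longrightarrow> mu k \<noteq> 0"
  using ts_nth_less_iff[OF finite_T, of k "Suc k"] by (simp add: mu_def)

lemma ts_mu_t: "Suc k < n \<Longrightarrow> ts_mu T (t k) = mu k"
  by (simp add: ts_mu_nth[OF finite_T] mu_def)

lemmas ts_sigma_t = ts_sigma_nth[OF finite_T]

lemma a_eq_t_r: "a = t r"
proof -
  obtain k where "k < n" "a = t k"
    using ts_nth_cases[OF finite_T a_in_T] by blast
  then show ?thesis
    using card_below_a card_below_ts_nth[OF finite_T] by simp
qed

lemma ts_sigma_a: "ts_sigma T a = t (Suc r)"
  using Suc_r_less by (simp add: a_eq_t_r ts_sigma_t)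

lemma ts_delta_a: "ts_delta T y a = (y (ts_sigma T a) - y a) / of_real (mu r)"
  using Suc_r_less by (simp add: ts_delta_def a_eq_t_r ts_sigma_t ts_mu_t)

lemma is_sol_iff_sl_eqn:
  "is_sol T a q lam y \<longleftrightarrow> (\<forall>j < n - 2. sl_eqn mu Q r lam (\<lambda>k. y (t k)) j)"
proof -
  have "card T = Suc (Suc (n - 2))"
    using card_ge_3 by simp
  moreover have "- ts_delta T (ts_delta T y) (t j) + of_real (q (t j)) * y a
      = lam * y (ts_sigma T (t j)) \<longleftrightarrow> sl_eqn mu Q r lam (\<lambda>k. y (t k)) j" if "j < n - 2" for j
    using that by (simp add: ts_delta_def ts_sigma_t ts_mu_t sl_eqn_def Q_def a_eq_t_r)
  ultimately show ?thesis
    unfolding is_sol_def by (auto simp: ts_kappa_kappa[OF finite_T])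
qed

lemma is_sol_unique:
  assumes "is_sol T a q lam y" "is_sol T a q lam z"
    and "y a = z a" "y (ts_sigma T a) = z (ts_sigma T a)" and "s \<in> T"
  shows "y s = z s"
proof -
  obtain k where "k < n" "s = t k"
    using ts_nth_cases[OF finite_T \<open>s \<in> T\<close>] by blast
  moreover have "(\<lambda>k. y (t k)) k = (\<lambda>k. z (t k)) k"
  proof (rule sl_eqn_unique[where mu = mu and Q = Q and r = r and lam = lam and n = n])
    show "y (t r) = z (t r)" "y (t (Suc r)) = z (t (Suc r))"
      using assms(3,4) Suc_r_less by (simp_all add: a_eq_t_r ts_sigma_t)
  qed (use assms \<open>k < n\<close> Suc_r_less mu_nonzero in \<open>auto simp: is_sol_iff_sl_eqn\<close>)
  ultimately show ?thesis
    by simp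
qed

definition lift :: "(nat \<Rightarrow> complex poly) \<Rightarrow> complex \<Rightarrow> real \<Rightarrow> complex" where
  "lift P lam s = (if s \<in> T then poly (P (card {u\<in>T. u < s})) lam else 0)"

lemma lift_t: "k < n \<Longrightarrow> lift P lam (t k) = poly (P k) lam"
  by (simp add: lift_def ts_nth_in[OF finite_T] card_below_ts_nth[OF finite_T])

lemma lift_a: "lift P lam a = poly (P r) lam"
  using Suc_r_less by (simp add: a_eq_t_r lift_t)

lemma lift_sigma_a: "lift P lam (ts_sigma T a) = poly (P (Suc r)) lam"
  using Suc_r_less by (simp add: ts_sigma_a lift_t)

lemma is_sol_lift_sol_poly: "is_sol T a q lam (lift (sol_poly mu Q r y0 y1) lam)"
  unfolding is_sol_iff_sl_eqn
proof (intro allI impI)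
  fix j assume j: "j < n - 2"
  then have "sl_eqn mu Q r lam (\<lambda>i. poly (sol_poly mu Q r y0 y1 i) lam) j"
    by (intro sol_poly_sl_eqn mu_nonzero) auto
  then show "sl_eqn mu Q r lam (\<lambda>k. lift (sol_poly mu Q r y0 y1) lam (t k)) j"
    using j Suc_r_less by (subst sl_eqn_cong) (auto simp: lift_t)
qed

lemma initial_value_solution:
  "(THE y. is_sol T a q lam y \<and> y a = c0 \<and> ts_delta T y a = c1 \<and> (\<forall>s. s \<notin> T \<longrightarrow> y s = 0))
    = lift (sol_poly mu Q r [:c0:] [:c0 + c1 * of_real (mu r):]) lam"
proof (rule the_equality)
  let ?f = "lift (sol_poly mu Q r [:c0:] [:c0 + c1 * of_real (mu r):]) lam"
  have mu_r: "complex_of_real (mu r) \<noteq> 0"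
    using mu_nonzero Suc_r_less by simp
  show "is_sol T a q lam ?f \<and> ?f a = c0 \<and> ts_delta T ?f a = c1 \<and> (\<forall>s. s \<notin> T \<longrightarrow> ?f s = 0)"
    using is_sol_lift_sol_poly mu_r
    by (simp add: ts_delta_a lift_a lift_sigma_a) (simp add: lift_def)
  fix y
  assume y: "is_sol T a q lam y \<and> y a = c0 \<and> ts_delta T y a = c1 \<and> (\<forall>s. s \<notin> T \<longrightarrow> y s = 0)"
  show "y = ?f"
  proof
    fix s
    show "y s = ?f s"
    proof (cases "s \<in> T")
      case True
      show ?thesis
      proof (rule is_sol_unique[OF _ is_sol_lift_sol_poly _ _ True])
        show "is_sol T a q lam y" "y a = ?f a"
          using y by (simp_all add: lift_a)
        show "y (ts_sigma T a) = ?f (ts_sigma T a)"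
          using y mu_r by (simp add: lift_sigma_a ts_delta_a field_simps)
      qed
    qed (use y in \<open>simp add: lift_def\<close>)
  qed
qed

definition C_poly :: "nat \<Rightarrow> complex poly" where "C_poly = sol_poly mu Q r 1 1"
definition S_poly :: "nat \<Rightarrow> complex poly" where "S_poly = sol_poly mu Q r 0 [:of_real (mu r):]"

lemma solC_eq: "solC T a q lam = lift C_poly lam"
  unfolding solC_def initial_value_solution C_poly_def by (simp add: one_pCons)

lemma solS_eq: "solS T a q lam = lift S_poly lam"
  unfolding solS_def initial_value_solution S_poly_def by simp

sublocale two_sided_recurrence C_poly S_poly r n
  "fwd_const mu" "fwd_lam mu" "fwd_prev mu" "fwd_nonlocal mu Q"
  "bwd_const mu" "bwd_lam mu" "bwd_next mu" "bwd_nonlocal mu Q" "of_real (mu r)"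
  by (unfold_locales; (unfold C_poly_def S_poly_def)?; (rule sol_poly_fwd sol_poly_bwd)?;
      simp add: Suc_r_less)

lemma solC: "is_sol T a q lam (solC T a q lam)"
    "solC T a q lam a = 1" "solC T a q lam (ts_sigma T a) = 1"
  unfolding solC_eq C_poly_def by (simp_all add: is_sol_lift_sol_poly lift_a lift_sigma_a)

lemma solS: "is_sol T a q lam (solS T a q lam)"
    "solS T a q lam a = 0" "solS T a q lam (ts_sigma T a) = of_real (mu r)"
  unfolding solS_eq S_poly_def by (simp_all add: is_sol_lift_sol_poly lift_a lift_sigma_a)

lemma sol_eq_lincomb_solC_solS:
  assumes "is_sol T a q lam y" "s \<in> T"
  shows "y s = y a * solC T a q lam s + ts_delta T y a * solS T a q lam s"
proof (rule is_sol_unique[OF assms(1) is_sol_lincomb[OF solC(1) solS(1)] _ _ assms(2)])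
  show "y (ts_sigma T a)
      = y a * solC T a q lam (ts_sigma T a) + ts_delta T y a * solS T a q lam (ts_sigma T a)"
    using mu_nonzero[of r] Suc_r_less by (simp add: solC solS ts_delta_a)
qed (simp add: solC solS)

lemma solC_solS_lincomb_nonzero:
  assumes "c0 \<noteq> 0 \<or> c1 \<noteq> 0"
  shows "\<exists>s\<in>T. c0 * solC T a q lam s + c1 * solS T a q lam s \<noteq> 0"
proof (cases "c0 = 0")
  case True
  then show ?thesis
    using assms mu_nonzero[of r] Suc_r_less ts_sigma_in[OF finite_T a_in_T]
    by (intro bexI[of _ "ts_sigma T a"]) (simp_all add: solC solS)
qed (use a_in_T in \<open>auto simp: solC solS intro!: bexI[of _ a]\<close>)

lemma eigenvalue_iff_char_fun_eq_0:
  "is_eigenvalue T a q a11 a12 a21 a22 b11 b12 b21 b22 lam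
     \<longleftrightarrow> char_fun T a q a11 a12 a21 a22 b11 b12 b21 b22 lam = 0"
proof -
  let ?C = "solC T a q lam" and ?S = "solS T a q lam"
  let ?U = "bform T a11 a12 a21 a22" and ?V = "bform T b11 b12 b21 b22"
  have "is_eigenvalue T a q a11 a12 a21 a22 b11 b12 b21 b22 lam \<longleftrightarrow>
    (\<exists>c0 c1. (c0 \<noteq> 0 \<or> c1 \<noteq> 0) \<and> c0 * ?U ?C + c1 * ?U ?S = 0 \<and> c0 * ?V ?C + c1 * ?V ?S = 0)"
    (is "_ \<longleftrightarrow> ?kernel")
  proof
    assume "is_eigenvalue T a q a11 a12 a21 a22 b11 b12 b21 b22 lam"
    then obtain y where nontrivial: "\<exists>s\<in>T. y s \<noteq> 0" and sol: "is_sol T a q lam y"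
      and U: "?U y = 0" and V: "?V y = 0"
      unfolding is_eigenvalue_def by blast
    let ?c0 = "y a" and ?c1 = "ts_delta T y a"
    have "bform T c11 c12 c21 c22 y = bform T c11 c12 c21 c22 (\<lambda>s. ?c0 * ?C s + ?c1 * ?S s)"
      for c11 c12 c21 c22
      using a_in_T sol_eq_lincomb_solC_solS[OF sol] by (intro bform_cong[OF finite_T]) blast+
    then have "?c0 * ?U ?C + ?c1 * ?U ?S = 0" "?c0 * ?V ?C + ?c1 * ?V ?S = 0"
      using U V by (simp_all only: bform_lincomb)
    moreover have "?c0 \<noteq> 0 \<or> ?c1 \<noteq> 0"
      using nontrivial sol_eq_lincomb_solC_solS[OF sol] by auto
    ultimately show ?kernel
      by blast
  next
    assume ?kernel
    then obtain c0 c1 where "c0 \<noteq> 0 \<or> c1 \<noteq> 0"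
      and "c0 * ?U ?C + c1 * ?U ?S = 0" "c0 * ?V ?C + c1 * ?V ?S = 0"
      by blast
    then show "is_eigenvalue T a q a11 a12 a21 a22 b11 b12 b21 b22 lam"
      unfolding is_eigenvalue_def
      by (intro exI[of _ "\<lambda>s. c0 * ?C s + c1 * ?S s"] conjI solC_solS_lincomb_nonzero
          is_sol_lincomb solC solS)
        (simp_all only: bform_lincomb)
  qed
  then show ?thesis
    unfolding char_fun_def det2_eq_0_iff_nontrivial_kernel .
qed

definition bform_poly :: "real \<Rightarrow> real \<Rightarrow> real \<Rightarrow> real \<Rightarrow> (nat \<Rightarrow> complex poly) \<Rightarrow> complex poly" where
  "bform_poly c11 c12 c21 c22 P =
       smult (of_real c11 - of_real c12 / of_real (mu 0)) (P 0)
     + smult (of_real c12 / of_real (mu 0)) (P 1)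
     + smult (of_real c21 - of_real c22 / of_real (mu (n - 2))) (P (n - 2))
     + smult (of_real c22 / of_real (mu (n - 2))) (P (n - 1))"

lemma ts_mu_Min: "ts_mu T (Min T) = mu 0"
proof -
  have "Min T = t 0"
    using Min_eq_ts_nth[OF finite_T] a_in_T by blast
  then show ?thesis
    using ts_mu_t[of 0] card_ge_3 by simp
qed

lemma bform_lift: "bform T c11 c12 c21 c22 (lift P lam) = poly (bform_poly c11 c12 c21 c22 P) lam"
proof -
  have card: "card T = Suc (Suc (n - 2))" and "Suc (n - 2) = n - 1"
    using card_ge_3 by auto
  then have "Min T = t 0" "ts_rho T (Max T) = t (n - 2)"
    "ts_sigma T (t 0) = t 1" "ts_sigma T (t (n - 2)) = t (n - 1)"
    "ts_mu T (t 0) = mu 0" "ts_mu T (t (n - 2)) = mu (n - 2)"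
    using Min_eq_ts_nth[OF finite_T] a_in_T Max_eq_ts_nth[OF finite_T card]
      ts_rho_nth[OF finite_T, of "n - 2"] ts_sigma_t ts_mu_t card_ge_3
    by auto
  moreover have "mu 0 \<noteq> 0" "mu (n - 2) \<noteq> 0"
    using mu_nonzero card_ge_3 by auto
  ultimately show ?thesis
    using card_ge_3 by (simp add: bform_def bform_poly_def ts_delta_def lift_t field_simps)
qed

definition Delta_poly ::
  "real \<Rightarrow> real \<Rightarrow> real \<Rightarrow> real \<Rightarrow> real \<Rightarrow> real \<Rightarrow> real \<Rightarrow> real \<Rightarrow> complex poly" where
  "Delta_poly a11 a12 a21 a22 b11 b12 b21 b22 =
     bform_poly a11 a12 a21 a22 C_poly * bform_poly b11 b12 b21 b22 S_poly
   - bform_poly b11 b12 b21 b22 C_poly * bform_poly a11 a12 a21 a22 S_poly"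

lemma poly_Delta_poly:
  "poly (Delta_poly a11 a12 a21 a22 b11 b12 b21 b22) lam
     = char_fun T a q a11 a12 a21 a22 b11 b12 b21 b22 lam"
  by (simp add: Delta_poly_def char_fun_def solC_eq solS_eq bform_lift)

lemma char_poly_eq_Delta_poly:
  "char_poly T a q a11 a12 a21 a22 b11 b12 b21 b22 = Delta_poly a11 a12 a21 a22 b11 b12 b21 b22"
  unfolding char_poly_def
proof (rule the_equality)
  show "p = Delta_poly a11 a12 a21 a22 b11 b12 b21 b22"
    if "\<forall>lam. poly p lam = char_fun T a q a11 a12 a21 a22 b11 b12 b21 b22 lam" for p
    using that by (simp add: poly_Delta_poly poly_eq_poly_eq_iff[symmetric] fun_eq_iff)
qed (simp add: poly_Delta_poly)

lemma eigenvalue_iff_char_poly_root: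
  "is_eigenvalue T a q a11 a12 a21 a22 b11 b12 b21 b22 lam
     \<longleftrightarrow> poly (char_poly T a q a11 a12 a21 a22 b11 b12 b21 b22) lam = 0"
  by (simp add: char_poly_eq_Delta_poly poly_Delta_poly eigenvalue_iff_char_fun_eq_0)

lemma degree_coeff_Delta_poly:
  "degree (Delta_poly a11 a12 a21 a22 b11 b12 b21 b22) \<le> n - 2"
  "coeff (Delta_poly a11 a12 a21 a22 b11 b12 b21 b22) (n - 2)
     = of_real ((a11 * mu 0 - a12) * b22 - (b11 * mu 0 - b12) * a22) / of_real (mu 0 * mu (n - 2))
       * coeff (casorati 0 (n - 1)) (n - 2)"
proof -
  define A1 where "A1 = complex_of_real a11 - of_real a12 / of_real (mu 0)"
  define A2 where "A2 = complex_of_real a12 / of_real (mu 0)"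
  define A3 where "A3 = complex_of_real a21 - of_real a22 / of_real (mu (n - 2))"
  define A4 where "A4 = complex_of_real a22 / of_real (mu (n - 2))"
  define B1 where "B1 = complex_of_real b11 - of_real b12 / of_real (mu 0)"
  define B2 where "B2 = complex_of_real b12 / of_real (mu 0)"
  define B3 where "B3 = complex_of_real b21 - of_real b22 / of_real (mu (n - 2))"
  define B4 where "B4 = complex_of_real b22 / of_real (mu (n - 2))"
  let ?m = "n - 2" and ?l = "n - 1"
  have Delta: "Delta_poly a11 a12 a21 a22 b11 b12 b21 b22
    = smult (A1*B2 - A2*B1) (casorati 0 1) + smult (A1*B3 - A3*B1) (casorati 0 ?m)
    + smult (A1*B4 - A4*B1) (casorati 0 ?l) + smult (A2*B3 - A3*B2) (casorati 1 ?m)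
    + smult (A2*B4 - A4*B2) (casorati 1 ?l) + smult (A3*B4 - A4*B3) (casorati ?m ?l)"
    unfolding Delta_poly_def bform_poly_def A1_def A2_def A3_def A4_def B1_def B2_def B3_def B4_def
    by (rule casorati_expansion)
  have low: "degree (casorati 0 1) \<le> n - 3" "degree (casorati 0 ?m) \<le> n - 3"
    "degree (casorati 1 ?m) \<le> n - 3" "degree (casorati 1 ?l) \<le> n - 3"
    "degree (casorati ?m ?l) \<le> n - 3"
    using card_ge_3 by (auto intro!: degree_casorati_le)
  moreover have "n - 3 < ?m"
    using card_ge_3 by simp
  ultimately have "coeff (casorati 0 1) ?m = 0" "coeff (casorati 0 ?m) ?m = 0"
    "coeff (casorati 1 ?m) ?m = 0" "coeff (casorati 1 ?l) ?m = 0" "coeff (casorati ?m ?l) ?m = 0"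
    by (meson coeff_eq_0 le_less_trans)+
  then have "coeff (Delta_poly a11 a12 a21 a22 b11 b12 b21 b22) ?m
      = (A1*B4 - A4*B1) * coeff (casorati 0 ?l) ?m"
    unfolding Delta by simp
  moreover have "A1*B4 - A4*B1
      = of_real ((a11 * mu 0 - a12) * b22 - (b11 * mu 0 - b12) * a22) / of_real (mu 0 * mu (n - 2))"
    using mu_nonzero card_ge_3
    by (simp add: A1_def A4_def B1_def B4_def field_simps)
  ultimately show "coeff (Delta_poly a11 a12 a21 a22 b11 b12 b21 b22) ?m
     = of_real ((a11 * mu 0 - a12) * b22 - (b11 * mu 0 - b12) * a22) / of_real (mu 0 * mu (n - 2))
       * coeff (casorati 0 ?l) ?m"
    by simp
  have "n - 3 \<le> ?m"
    by simp
  with low show "degree (Delta_poly a11 a12 a21 a22 b11 b12 b21 b22) \<le> ?m"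
    unfolding Delta using casorati_first_last(1)
    by (intro degree_add_le order.trans[OF degree_smult_le]) (auto intro: order.trans)
qed

lemma casorati_first_last_coeff_nonzero: "coeff (casorati 0 (n - 1)) (n - 2) \<noteq> 0"
proof -
  have "bwd_lam mu (r - 1 - k) \<noteq> 0" if "k < r" for k
    using mu_nonzero[of "r - 1 - k"] that Suc_r_less by (simp add: bwd_lam_def)
  moreover have "fwd_lam mu (r + k) \<noteq> 0" if "k < n - r - 2" for k
    using mu_nonzero[of "r + k"] mu_nonzero[of "Suc (r + k)"] that by (simp add: fwd_lam_def)
  moreover have "complex_of_real (mu r) \<noteq> 0"
    using mu_nonzero[of r] Suc_r_less by simp
  ultimately show ?thesis
    unfolding casorati_first_last(2) by (simp add: prod_zero_iff)
qed

lemma char_poly_degree_le: "degree (char_poly T a q a11 a12 a21 a22 b11 b12 b21 b22) \<le> n - 2"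
  using degree_coeff_Delta_poly(1) by (simp add: char_poly_eq_Delta_poly)

lemma char_poly_top_coeff_eq_0_iff:
  "coeff (char_poly T a q a11 a12 a21 a22 b11 b12 b21 b22) (n - 2) = 0
     \<longleftrightarrow> (a11 * ts_mu T (Min T) - a12) * b22 - (b11 * ts_mu T (Min T) - b12) * a22 = 0"
proof -
  have "complex_of_real (mu 0 * mu (n - 2)) \<noteq> 0"
    using mu_nonzero[of 0] mu_nonzero[of "n - 2"] card_ge_3 by simp
  then show ?thesis
    unfolding char_poly_eq_Delta_poly degree_coeff_Delta_poly(2) ts_mu_Min
    using casorati_first_last_coeff_nonzero
    by (simp only: mult_eq_0_iff divide_eq_0_iff of_real_eq_0_iff) simp
qed

end

theorem theorem2:
  fixes T :: "real set" and a :: real and m r :: nat and q :: "real \<Rightarrow> real"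
    and a11 a12 a21 a22 b11 b12 b21 b22 :: real
  assumes "finite T" and "a \<in> T"
    and "card {t\<in>T. t > a} = m" and "card {t\<in>T. t < a} = r"
    and "m \<ge> 1" and "r + m \<ge> 2"
  defines "E \<equiv> {lam. is_eigenvalue T a q a11 a12 a21 a22 b11 b12 b21 b22 lam}"
    and "N \<equiv> (\<Sum>lam\<in>{lam. is_eigenvalue T a q a11 a12 a21 a22 b11 b12 b21 b22 lam}. eig_mult T a q a11 a12 a21 a22 b11 b12 b21 b22 lam)"
    and "detA \<equiv> (a11 * ts_mu T (Min T) - a12) * b22 - (b11 * ts_mu T (Min T) - b12) * a22"
    and "n \<equiv> m + r + 1"
  shows "(detA \<noteq> 0 \<longrightarrow> finite E \<and> N = n - 2)
       \<and> (detA = 0 \<longrightarrow> finite E \<longrightarrow> N < n - 2)"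
proof -
  have "card T = n"
    using card_split[OF assms(1,2)] assms(3,4) by (simp add: n_def)
  then interpret finite_bvp T a q r
    using assms by unfold_locales auto
  let ?p = "char_poly T a q a11 a12 a21 a22 b11 b12 b21 b22"
  have "E = {lam. poly ?p lam = 0}" and "N = (\<Sum>lam | poly ?p lam = 0. order lam ?p)"
    unfolding E_def N_def eig_mult_def eigenvalue_iff_char_poly_root by simp_all
  then show ?thesis
    using sum_order_roots_degree_bound[OF char_poly_degree_le] char_poly_top_coeff_eq_0_iff
      \<open>card T = n\<close>
    unfolding detA_def by auto
qed

end
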